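(* Let $A$ be an associative (not necessarily unital) algebra over a field $F$, let $n\ge 1$, $\sigma\in S_n$, and $q\in F$ with $q\neq 1$. If $A$ satisfies the identity $x_1\cdots x_n=q\,x_{\sigma(1)}\cdots x_{\sigma(n)}$, then $A$ is nilpotent, i.e. there is $m$ such that $a_1\cdots a_m=0$ for all $a_1,\dots,a_m\in A$.
   Context: $A$ satisfies the identity $x_1\cdots x_n=q\,x_{\sigma(1)}\cdots x_{\sigma(n)}$ means $a_1\cdots a_n=q\,a_{\sigma(1)}\cdots a_{\sigma(n)}$ for all $a_1,\dots,a_n\in A$. *)

theory Defs
  imports Main "HOL-Combinatorics.Permutations"
begin

definition algebra_over :: "('f::field \<Rightarrow> 'a::ring \<Rightarrow> 'a) \<Rightarrow> bool" where
  "algebra_over smult \<longleftrightarrow>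
     (\<forall>x. smult 1 x = x) \<and>
     (\<forall>c d x. smult c (smult d x) = smult (c * d) x) \<and>
     (\<forall>c d x. smult (c + d) x = smult c x + smult d x) \<and>
     (\<forall>c x y. smult c (x + y) = smult c x + smult c y) \<and>
     (\<forall>c x y. smult c (x * y) = smult c x * y) \<and>
     (\<forall>c x y. smult c (x * y) = x * smult c y)"

text \<open>Ordered product a 0 * a 1 * ... * a (n-1), meaningful for n >= 1
  (no unit available; the value for n = 0 is a dummy 0 and never used).\<close>
fun prodn :: "(nat \<Rightarrow> 'a::ring) \<Rightarrow> nat \<Rightarrow> 'a" where
  "prodn a 0 = 0"
| "prodn a (Suc 0) = a 0"
| "prodn a (Suc (Suc k)) = prodn a (Suc k) * a (Suc k)"

end

theory Submission
  imports Defs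
begin

(*
  If q = 0 the identity kills every product of n factors, so let q \<noteq> 0; then multiplication by
  q is injective.  If \<sigma> moves some point, there are adjacent positions i, i + 1 that inv \<sigma>
  does not send to adjacent positions.  Multiplying a new factor c into the (i+1)-th argument
  from the left or into the i-th argument from the right does not change the left-hand side of
  the identity, so after cancelling q the factor c may jump over a block of L \<ge> 1 factors,
  provided enough factors stand on both sides.  Absorbing one of two neighbouring factors into
  such a block shows that neighbours commute inside long products; hence x M y, with x a product
  of n and y a product of 2n factors, is symmetric in the n factors of M.  Applying the identity
  to M now gives w = q w for every product w of 4n factors (for \<sigma> = id this is immediate),
  and w = 0 because q \<noteq> 1.
*)

definition products :: "nat \<Rightarrow> 'a::semigroup_mult set" where
  "products k = {foldl (*) z zs | z zs. Suc (length zs) = k}"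

lemma mult_foldl: "(x::'a::semigroup_mult) * foldl (*) z zs = foldl (*) x (z # zs)"
  by (induction zs arbitrary: z) (simp_all add: mult.assoc)

lemma foldl_mult_eq_mult_foldr: "foldl (*) (z::'a::semigroup_mult) zs * y = z * foldr (*) zs y"
  by (induction zs arbitrary: z) (simp_all add: mult.assoc)

lemma products_index_ge_one: "x \<in> products k \<Longrightarrow> 1 \<le> k"
  unfolding products_def by auto

lemma products_one: "z \<in> products 1"
  unfolding products_def by force

lemma foldl_in_products: "x \<in> products k \<Longrightarrow> foldl (*) x ws \<in> products (k + length ws)"
  unfolding products_def by (force simp flip: foldl_append)

lemma products_add_foldlE:
  assumes "z \<in> products (k + l)" "1 \<le> k"
  obtains x M where "x \<in> products k" "length M = l" "z = foldl (*) x M"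
proof -
  obtain z0 zs where z: "z = foldl (*) z0 zs" "Suc (length zs) = k + l"
    using assms(1) unfolding products_def by blast
  show thesis
  proof
    show "foldl (*) z0 (take (k - 1) zs) \<in> products k"
      using z assms(2) unfolding products_def by force
    show "length (drop (k - 1) zs) = l" using z assms(2) by simp
    show "z = foldl (*) (foldl (*) z0 (take (k - 1) zs)) (drop (k - 1) zs)"
      using z by (simp flip: foldl_append)
  qed
qed

lemma products_antimono:
  assumes "z \<in> products k" "1 \<le> j" "j \<le> k"
  shows "z \<in> products j"
proof -
  obtain x M where "length M = j - 1" "z = foldl (*) x M"
  proof (rule products_add_foldlE)
    show "z \<in> products (Suc (k - j) + (j - 1))" using assms by simp
  qed auto
  then show ?thesis
    using foldl_in_products[OF products_one, of x M] assms(2) by simp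
qed

lemma products_mult:
  assumes "x \<in> products i" "y \<in> products j"
  shows "x * y \<in> products (i + j)"
proof -
  obtain y0 ys where "y = foldl (*) y0 ys" "Suc (length ys) = j"
    using assms(2) unfolding products_def by blast
  then show ?thesis
    using foldl_in_products[OF assms(1), of "y0 # ys"] by (simp add: mult_foldl)
qed

lemma products_addE:
  assumes "z \<in> products (k + l)" "1 \<le> k" "1 \<le> l"
  obtains x y where "x \<in> products k" "y \<in> products l" "z = x * y"
proof -
  obtain x M where x: "x \<in> products k" "length M = l" "z = foldl (*) x M"
    using products_add_foldlE[OF assms(1,2)] .
  then obtain m ms where "M = m # ms" using assms(3) by (cases M) auto
  show thesis
  proof
    show "x \<in> products k" by (fact x(1))
    show "foldl (*) m ms \<in> products l"
      using \<open>M = m # ms\<close> x(2) unfolding products_def by auto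
    show "z = x * foldl (*) m ms"
      using \<open>M = m # ms\<close> x(3) by (simp add: mult_foldl)
  qed
qed

lemma products_mult_right:
  assumes "x \<in> products k"
  shows "x * z \<in> products k"
  using products_antimono[OF products_mult[OF assms products_one], of k]
    products_index_ge_one[OF assms] by simp

lemma products_mult_left:
  assumes "y \<in> products k"
  shows "z * y \<in> products k"
  using products_antimono[OF products_mult[OF products_one assms], of k]
    products_index_ge_one[OF assms] by simp

lemma foldr_in_products: "y \<in> products k \<Longrightarrow> foldr (*) ws y \<in> products k"
  by (induction ws) (simp_all add: products_mult_left)

definition insert_nth :: "nat \<Rightarrow> 'a \<Rightarrow> 'a list \<Rightarrow> 'a list" where
  "insert_nth k c xs = take k xs @ c # drop k xs"

lemma foldl_update_mult_left:
  "k < length xs \<Longrightarrow>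
    foldl (*) x0 (xs[k := c * xs ! k]) = foldl (*) (x0::'a::semigroup_mult) (insert_nth k c xs)"
  by (simp add: insert_nth_def upd_conv_take_nth_drop Cons_nth_drop_Suc[symmetric] mult.assoc)

lemma foldl_update_mult_right:
  "k < length xs \<Longrightarrow>
    foldl (*) x0 (xs[k := xs ! k * c]) = foldl (*) (x0::'a::semigroup_mult) (insert_nth (Suc k) c xs)"
  by (simp add: insert_nth_def upd_conv_take_nth_drop take_Suc_conv_app_nth mult.assoc)

lemma permute_list_list_update:
  assumes "\<sigma> permutes {..<length xs}"
  shows "permute_list \<sigma> (xs[j := v]) = (permute_list \<sigma> xs)[inv \<sigma> j := v]"
proof (rule nth_equalityI)
  fix k assume k: "k < length (permute_list \<sigma> (xs[j := v]))"
  then have "\<sigma> k < length xs"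
    using permutes_in_image[OF assms] by simp
  moreover have "\<sigma> k = j \<longleftrightarrow> k = inv \<sigma> j"
    using assms by (metis permutes_inverses)
  ultimately show "permute_list \<sigma> (xs[j := v]) ! k
      = (permute_list \<sigma> xs)[inv \<sigma> j := v] ! k"
    using assms k by (cases "\<sigma> k = j") (auto simp: permute_list_nth)
qed simp

lemma permutes_eq_id_if_consecutive:
  assumes perm: "\<tau> permutes {..<n}"
    and step: "\<And>i. Suc i < n \<Longrightarrow> \<tau> (Suc i) = Suc (\<tau> i)"
  shows "\<tau> = id"
proof
  fix j
  show "\<tau> j = id j"
  proof (cases "j < n")
    case True
    have shift: "k < n \<Longrightarrow> \<tau> k = \<tau> 0 + k" for k
      by (induction k) (simp_all add: step)
    have "\<tau> (n - 1) < n"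
      using permutes_in_image[OF perm, of "n - 1"] True by simp
    then have "\<tau> 0 = 0"
      using shift[of "n - 1"] True by simp
    then show ?thesis using shift[OF True] by simp
  next
    case False
    then show ?thesis using permutes_not_in[OF perm] by simp
  qed
qed

lemma foldl_insert_nth_exchange:
  fixes \<phi> :: "'a::semigroup_mult \<Rightarrow> 'a" and ys :: "'a list"
  assumes "inj \<phi>" and perm: "\<sigma> permutes {..<n}"
    and identity: "\<And>x0 xs. length xs = n \<Longrightarrow>
      foldl (*) x0 xs = \<phi> (foldl (*) x0 (permute_list \<sigma> xs))"
    and "Suc i < n" and "length ys = n"
  shows "foldl (*) x0 (insert_nth (inv \<sigma> (Suc i)) c ys)
    = foldl (*) x0 (insert_nth (Suc (inv \<sigma> i)) c ys)"
proof -
  define xs where "xs = permute_list (inv \<sigma>) ys"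
  have perm_ys: "\<sigma> permutes {..<length ys}" using perm assms(5) by simp
  have perm_xs: "\<sigma> permutes {..<length xs}" using perm_ys xs_def by simp
  have inv_perm: "inv \<sigma> permutes {..<length ys}" using permutes_inv[OF perm_ys] .
  have "permute_list \<sigma> xs = permute_list (inv \<sigma> \<circ> \<sigma>) ys"
    unfolding xs_def permute_list_compose[OF perm_ys] ..
  then have ys: "permute_list \<sigma> xs = ys"
    using permutes_inv_o(2)[OF perm_ys] by simp
  have xs_nth: "xs ! k = ys ! inv \<sigma> k" if "k < n" for k
    unfolding xs_def using permute_list_nth[OF inv_perm] that assms(5) by simp
  have inv_less: "inv \<sigma> k < n" if "k < n" for k
    using permutes_in_image[OF inv_perm] that assms(5) by simp
  have lt: "inv \<sigma> (Suc i) < length ys" "inv \<sigma> i < length ys" "Suc i < length xs" "i < length xs"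
    using inv_less assms(4,5) xs_def by simp_all
  have upd_left: "permute_list \<sigma> (xs[Suc i := c * xs ! Suc i])
      = ys[inv \<sigma> (Suc i) := c * ys ! inv \<sigma> (Suc i)]"
    using assms(4) by (simp only: permute_list_list_update[OF perm_xs] ys xs_nth)
  have upd_right: "permute_list \<sigma> (xs[i := xs ! i * c]) = ys[inv \<sigma> i := ys ! inv \<sigma> i * c]"
    using assms(4) by (simp only: permute_list_list_update[OF perm_xs] ys xs_nth Suc_lessD)
  have "\<phi> (foldl (*) x0 (insert_nth (inv \<sigma> (Suc i)) c ys))
      = \<phi> (foldl (*) x0 (permute_list \<sigma> (xs[Suc i := c * xs ! Suc i])))"
    by (simp only: upd_left foldl_update_mult_left[OF lt(1)])
  also have "\<dots> = foldl (*) x0 (xs[Suc i := c * xs ! Suc i])"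
    by (rule identity[symmetric]) (simp add: xs_def assms(5))
  also have "\<dots> = foldl (*) x0 (xs[i := xs ! i * c])"
    by (simp only: foldl_update_mult_left[OF lt(3)] foldl_update_mult_right[OF lt(4)])
  also have "\<dots> = \<phi> (foldl (*) x0 (permute_list \<sigma> (xs[i := xs ! i * c])))"
    by (rule identity) (simp add: xs_def assms(5))
  also have "\<dots> = \<phi> (foldl (*) x0 (insert_nth (Suc (inv \<sigma> i)) c ys))"
    by (simp only: upd_right foldl_update_mult_right[OF lt(2)])
  finally show ?thesis using \<open>inj \<phi>\<close> by (simp add: inj_eq)
qed

lemma products_Suc_foldrE:
  assumes "y \<in> products (Suc m)"
  obtains V r where "length V = m" "y = foldr (*) V (r::'a::semigroup_mult)"
proof -
  obtain y0 ys where y: "y = foldl (*) y0 ys" "length ys = m"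
    using assms unfolding products_def by auto
  show thesis
  proof (cases ys rule: rev_exhaust)
    case Nil
    then show thesis using that[of "[]" y0] y by simp
  next
    case (snoc ys' r)
    then show thesis using that[of "y0 # ys'" r] y by (simp add: foldl_mult_eq_mult_foldr)
  qed
qed

lemma mult_exchange_of_insert_nth:
  fixes x B y c :: "'a::semigroup_mult"
  assumes ins: "\<And>(x0::'a) ys c. length ys = n \<Longrightarrow>
      foldl (*) x0 (insert_nth s c ys) = foldl (*) x0 (insert_nth s' c ys)"
    and "s < s'" "s' \<le> n"
    and "x \<in> products (Suc s)" "B \<in> products (s' - s)" "y \<in> products (Suc (n - s'))"
  shows "x * c * B * y = x * B * c * y"
proof -
  obtain x0 U where x: "x = foldl (*) x0 U" "length U = s"
    using assms(4) unfolding products_def by auto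
  obtain b0 bs where B: "B = foldl (*) b0 bs" "Suc (length bs) = s' - s"
    using assms(5) unfolding products_def by auto
  obtain V r where y: "length V = n - s'" "y = foldr (*) V r"
    using products_Suc_foldrE[OF assms(6)] .
  define W where "W = U @ (b0 # bs) @ V"
  have "length W = n" using x(2) B(2) y(1) assms(2,3) unfolding W_def by simp
  have "x * c * B * y = foldl (*) x0 (insert_nth s c W) * r"
    using x B y unfolding W_def insert_nth_def
    by (simp add: mult_foldl foldl_mult_eq_mult_foldr[symmetric])
  also have "\<dots> = foldl (*) x0 (insert_nth s' c W) * r"
    using ins[OF \<open>length W = n\<close>] by simp
  also have "\<dots> = x * B * c * y"
  proof -
    have "insert_nth s' c W = U @ (b0 # bs) @ c # V"
      using x(2) B(2)[symmetric] assms(2) unfolding W_def insert_nth_def by simp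
    then show ?thesis
      using x B y by (simp add: mult_foldl foldl_mult_eq_mult_foldr[symmetric])
  qed
  finally show ?thesis .
qed

lemma mult_swap_of_exchange:
  fixes x y a b :: "'a::semigroup_mult"
  assumes exch: "\<And>(x::'a) c B y.
      x \<in> products n \<Longrightarrow> B \<in> products L \<Longrightarrow> y \<in> products n \<Longrightarrow>
      x * c * B * y = x * B * c * y"
    and "1 \<le> L" "L \<le> n" "x \<in> products n" "y \<in> products (L + n)"
  shows "x * a * b * y = x * b * a * y"
proof -
  obtain D y' where D: "D \<in> products L" "y' \<in> products n" "y = D * y'"
    using products_addE[OF assms(5)] assms(2,3) by auto
  have bD: "b * D \<in> products L" using products_mult_left[OF D(1)] .
  have xb: "x * b \<in> products n" using products_mult_right[OF assms(4)] .
  have "x * a * b * y = x * a * (b * D) * y'" using D(3) by (simp add: mult.assoc)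
  also have "\<dots> = x * (b * D) * a * y'" using exch[OF assms(4) bD D(2)] .
  also have "\<dots> = x * b * D * a * y'" by (simp add: mult.assoc)
  also have "\<dots> = x * b * a * D * y'" using exch[OF xb D(1,2)] by simp
  also have "\<dots> = x * b * a * y" using D(3) by (simp add: mult.assoc)
  finally show ?thesis .
qed

lemma foldl_mult_move_right:
  fixes x y :: "'a::semigroup_mult"
  assumes swap: "\<And>(x::'a) y a b. x \<in> products k \<Longrightarrow> y \<in> products m \<Longrightarrow>
      x * a * b * y = x * b * a * y"
    and "x \<in> products k" "y \<in> products m"
  shows "foldl (*) x (a # zs @ W) * y = foldl (*) x (zs @ a # W) * y"
  using assms(2)
proof (induction zs arbitrary: x)
  case (Cons z zs)
  have "foldl (*) x (a # (z # zs) @ W) * y = x * a * z * foldr (*) (zs @ W) y"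
    by (simp add: foldl_mult_eq_mult_foldr)
  also have "\<dots> = x * z * a * foldr (*) (zs @ W) y"
    using swap[OF Cons.prems foldr_in_products[OF assms(3)]] .
  also have "\<dots> = foldl (*) (x * z) (a # zs @ W) * y"
    by (simp add: foldl_mult_eq_mult_foldr)
  also have "\<dots> = foldl (*) (x * z) (zs @ a # W) * y"
    using Cons.IH[OF products_mult_right[OF Cons.prems]] .
  finally show ?case by simp
qed simp

lemma foldl_mult_eq_if_mset_eq:
  fixes x y :: "'a::semigroup_mult"
  assumes swap: "\<And>(x::'a) y a b. x \<in> products k \<Longrightarrow> y \<in> products m \<Longrightarrow>
      x * a * b * y = x * b * a * y"
    and "x \<in> products k" "y \<in> products m" "mset xs = mset ys"
  shows "foldl (*) x xs * y = foldl (*) x ys * y"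
  using assms(2,4)
proof (induction xs arbitrary: x ys)
  case (Cons a xs)
  obtain ys1 ys2 where ys: "ys = ys1 @ a # ys2"
    using Cons.prems(2) by (metis list.set_intros(1) mset_eq_setD split_list)
  have "foldl (*) (x * a) xs * y = foldl (*) (x * a) (ys1 @ ys2) * y"
  proof (rule Cons.IH[OF products_mult_right[OF Cons.prems(1)]])
    show "mset xs = mset (ys1 @ ys2)" using Cons.prems(2) ys by simp
  qed
  then have "foldl (*) x (a # xs) * y = foldl (*) x (a # ys1 @ ys2) * y" by simp
  also have "\<dots> = foldl (*) x ys * y"
    using foldl_mult_move_right[OF swap Cons.prems(1) assms(3)] ys by simp
  finally show ?case .
qed simp

lemma mult_swap_of_identity:
  fixes \<phi> :: "'a::semigroup_mult \<Rightarrow> 'a" and x y a b :: 'a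
  assumes "inj \<phi>" and perm: "\<sigma> permutes {..<n}" and "\<sigma> \<noteq> id"
    and identity: "\<And>(x0::'a) xs. length xs = n \<Longrightarrow>
      foldl (*) x0 xs = \<phi> (foldl (*) x0 (permute_list \<sigma> xs))"
    and "x \<in> products n" "y \<in> products (2 * n)"
  shows "x * a * b * y = x * b * a * y"
proof -
  have inv_perm: "inv \<sigma> permutes {..<n}" using permutes_inv[OF perm] .
  have "inv \<sigma> \<noteq> id"
    using \<open>\<sigma> \<noteq> id\<close> permutes_inv_inv[OF perm] by (metis inv_id)
  then obtain i where i: "Suc i < n" "inv \<sigma> (Suc i) \<noteq> Suc (inv \<sigma> i)"
    using permutes_eq_id_if_consecutive[OF inv_perm] by blast
  have bounds: "inv \<sigma> (Suc i) < n" "Suc (inv \<sigma> i) \<le> n"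
    using permutes_in_image[OF inv_perm] i(1) by (simp_all add: Suc_le_eq)
  obtain s s' where s: "s < s'" "s' \<le> n"
    and ins: "\<And>(x0::'a) ys c. length ys = n \<Longrightarrow>
      foldl (*) x0 (insert_nth s c ys) = foldl (*) x0 (insert_nth s' c ys)"
  proof (cases "inv \<sigma> (Suc i) < Suc (inv \<sigma> i)")
    case True
    show thesis
    proof (rule that)
      show "foldl (*) x0 (insert_nth (inv \<sigma> (Suc i)) c ys)
          = foldl (*) x0 (insert_nth (Suc (inv \<sigma> i)) c ys)" if "length ys = n" for x0 :: 'a and ys c
        by (rule foldl_insert_nth_exchange[OF assms(1) perm identity i(1) that])
    qed (use True bounds in simp_all)
  next
    case False
    show thesis
    proof (rule that)
      show "foldl (*) x0 (insert_nth (Suc (inv \<sigma> i)) c ys)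
          = foldl (*) x0 (insert_nth (inv \<sigma> (Suc i)) c ys)" if "length ys = n" for x0 :: 'a and ys c
        by (rule foldl_insert_nth_exchange[OF assms(1) perm identity i(1) that, symmetric])
    qed (use False i(2) bounds in simp_all)
  qed
  have exch: "x' * c * B * y' = x' * B * c * y'"
    if "x' \<in> products n" "B \<in> products (s' - s)" "y' \<in> products n" for x' c B y' :: 'a
    using mult_exchange_of_insert_nth[of n s s' x' B y' c, OF ins s] that(2) s
      products_antimono[OF that(1), of "Suc s"] products_antimono[OF that(3), of "Suc (n - s')"]
    by simp
  show ?thesis
  proof (rule mult_swap_of_exchange[OF exch])
    show "y \<in> products (s' - s + n)" using products_antimono[OF assms(6)] s by simp
  qed (use s assms(5) in simp_all)
qed

lemma foldl_permute_list_mult_eq: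
  fixes \<phi> :: "'a::semigroup_mult \<Rightarrow> 'a" and x y :: 'a
  assumes "inj \<phi>" and perm: "\<sigma> permutes {..<n}"
    and identity: "\<And>(x0::'a) xs. length xs = n \<Longrightarrow>
      foldl (*) x0 xs = \<phi> (foldl (*) x0 (permute_list \<sigma> xs))"
    and "x \<in> products n" "y \<in> products (2 * n)" "length M = n"
  shows "foldl (*) x (permute_list \<sigma> M) * y = foldl (*) x M * y"
proof (cases "\<sigma> = id")
  case False
  show ?thesis
  proof (rule foldl_mult_eq_if_mset_eq[OF mult_swap_of_identity[OF assms(1) perm False identity]])
    show "mset (permute_list \<sigma> M) = mset M"
      using perm assms(6) by simp
  qed (use assms(4,5) in simp_all)
qed simp

lemma products_fixed_by_identity:
  fixes \<phi> :: "'a::semigroup_mult \<Rightarrow> 'a"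
  assumes "inj \<phi>" and perm: "\<sigma> permutes {..<n}"
    and identity: "\<And>(x0::'a) xs. length xs = n \<Longrightarrow>
      foldl (*) x0 xs = \<phi> (foldl (*) x0 (permute_list \<sigma> xs))"
    and \<phi>_mult: "\<And>u v. \<phi> u * v = \<phi> (u * v)"
    and "z \<in> products (4 * n)"
  shows "z = \<phi> z"
proof -
  have "1 \<le> n" using products_index_ge_one[OF assms(5)] by simp
  have "z \<in> products ((n + n) + 2 * n)" using assms(5) by simp
  then obtain w y where w: "w \<in> products (n + n)" and y: "y \<in> products (2 * n)"
    and z: "z = w * y"
    by (rule products_addE) (use \<open>1 \<le> n\<close> in simp_all)
  obtain x M where x: "x \<in> products n" and M: "length M = n" and w_eq: "w = foldl (*) x M"
    by (rule products_add_foldlE[OF w]) (use \<open>1 \<le> n\<close> in simp)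
  have "z = \<phi> (foldl (*) x (permute_list \<sigma> M) * y)"
    unfolding z w_eq identity[OF M] \<phi>_mult ..
  also have "\<dots> = \<phi> z"
    using foldl_permute_list_mult_eq[OF assms(1) perm identity x y M] z w_eq by simp
  finally show ?thesis .
qed

lemma algebra_over_smult_zero_left:
  assumes "algebra_over smult"
  shows "smult 0 x = 0"
proof -
  have "smult (0 + 0) x = smult 0 x + smult 0 x"
    using assms unfolding algebra_over_def by blast
  then show ?thesis by simp
qed

lemma algebra_over_smult_zero_right:
  assumes "algebra_over smult"
  shows "smult c 0 = 0"
proof -
  have "smult c (0 + 0) = smult c 0 + smult c 0"
    using assms unfolding algebra_over_def by blast
  then show ?thesis by simp
qed

lemma algebra_over_smult_mult_left: "algebra_over smult \<Longrightarrow> smult c x * y = smult c (x * y)"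
  unfolding algebra_over_def by simp

lemma algebra_over_mult_smult_right: "algebra_over smult \<Longrightarrow> x * smult c y = smult c (x * y)"
  unfolding algebra_over_def by metis

lemma algebra_over_inj_smult:
  assumes "algebra_over smult" "c \<noteq> 0"
  shows "inj (smult c)"
proof (rule inj_on_inverseI)
  show "smult (inverse c) (smult c x) = x" for x
    using assms unfolding algebra_over_def by simp
qed

lemma algebra_over_eq_zero_if_smult_eq:
  assumes alg: "algebra_over smult" and "q \<noteq> 1" and fixed: "x = smult q x"
  shows "x = 0"
proof -
  have "smult ((1 - q) + q) x = smult (1 - q) x + smult q x" and one: "smult 1 x = x"
    using alg unfolding algebra_over_def by blast+
  then have "smult (1 - q) x = 0"
    using fixed[symmetric] by simp
  then have "smult (inverse (1 - q) * (1 - q)) x = 0"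
    using alg algebra_over_smult_zero_right[OF alg] unfolding algebra_over_def by metis
  moreover have "inverse (1 - q) * (1 - q) = 1"
    using \<open>q \<noteq> 1\<close> by simp
  ultimately show ?thesis using one by simp
qed

lemma prodn_Suc_eq_foldl: "prodn f (Suc k) = foldl (*) (f 0) (map f [1..<Suc k])"
  by (induction k) simp_all

lemma prodn_in_products:
  assumes "1 \<le> k"
  shows "prodn f k \<in> products k"
proof -
  have "prodn f k = foldl (*) (f 0) (map f [1..<k])" "Suc (length (map f [1..<k])) = k"
    using prodn_Suc_eq_foldl[of f "k - 1"] assms by simp_all
  then show ?thesis unfolding products_def by blast
qed

lemma mult_prodn_eq_foldl: "x0 * prodn f (Suc k) = foldl (*) x0 (map f [0..<Suc k])"
  by (simp add: prodn_Suc_eq_foldl mult_foldl upt_conv_Cons del: upt_Suc)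

lemma foldl_eq_smult_foldl_permute_list:
  assumes alg: "algebra_over smult" and "n \<ge> 1"
    and identity: "\<forall>a :: nat \<Rightarrow> 'a. prodn a n = smult q (prodn (\<lambda>i. a (\<sigma> i)) n)"
    and "length xs = n"
  shows "foldl (*) x0 xs = smult q (foldl (*) x0 (permute_list \<sigma> (xs :: 'a::ring list)))"
proof -
  obtain k where n: "n = Suc k" using \<open>n \<ge> 1\<close> by (cases n) auto
  have expand: "x0 * prodn f n = foldl (*) x0 (map f [0..<n])" for f :: "nat \<Rightarrow> 'a"
    unfolding n by (rule mult_prodn_eq_foldl)
  have "foldl (*) x0 xs = x0 * prodn (nth xs) n"
    using expand map_nth[of xs] assms(4) by simp
  also have "\<dots> = x0 * smult q (prodn (\<lambda>i. xs ! \<sigma> i) n)"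
    using identity[rule_format, of "nth xs"] by simp
  also have "\<dots> = smult q (x0 * prodn (\<lambda>i. xs ! \<sigma> i) n)"
    by (rule algebra_over_mult_smult_right[OF alg])
  also have "\<dots> = smult q (foldl (*) x0 (permute_list \<sigma> xs))"
    using expand assms(4) by (simp add: permute_list_def)
  finally show ?thesis .
qed

theorem theorem4p4:
  fixes smult :: "'f::field \<Rightarrow> 'a::ring \<Rightarrow> 'a"
    and n :: nat and \<sigma> :: "nat \<Rightarrow> nat" and q :: 'f
  assumes "algebra_over smult"
    and "n \<ge> 1"
    and "\<sigma> permutes {..<n}"
    and "q \<noteq> 1"
    and "\<forall>a :: nat \<Rightarrow> 'a. prodn a n = smult q (prodn (\<lambda>i. a (\<sigma> i)) n)"
  shows "\<exists>m \<ge> 1. \<forall>a :: nat \<Rightarrow> 'a. prodn a m = 0"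
proof (cases "q = 0")
  case True
  then have "prodn a n = 0" for a :: "nat \<Rightarrow> 'a"
    using assms(5)[rule_format, of a] algebra_over_smult_zero_left[OF assms(1)] by simp
  with assms(2) show ?thesis by blast
next
  case False
  have "prodn a (4 * n) = 0" for a :: "nat \<Rightarrow> 'a"
  proof (rule algebra_over_eq_zero_if_smult_eq[OF assms(1,4)])
    show "prodn a (4 * n) = smult q (prodn a (4 * n))"
    proof (rule products_fixed_by_identity[OF _ assms(3)
          foldl_eq_smult_foldl_permute_list[OF assms(1,2,5)]])
      show "inj (smult q)" using algebra_over_inj_smult[OF assms(1) False] .
      show "smult q u * v = smult q (u * v)" for u v
        using algebra_over_smult_mult_left[OF assms(1)] .
      show "prodn a (4 * n) \<in> products (4 * n)"
        using prodn_in_products[of "4 * n"] assms(2) by simp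
    qed
  qed
  with assms(2) show ?thesis by (intro exI[of _ "4 * n"]) simp
qed

end
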